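(* Let $\mathcal{G}$ be a finite collection of nonempty subsets of $\{1,\dots,d\}$, let $n=\sum_{g\in\mathcal{G}}|g|$, and let $\mathbb{R}^n$ be partitioned into pairwise disjoint index blocks $j(g)$, $|j(g)|=|g|$, $g\in\mathcal{G}$, with $\mathbf{x}_{j(g)}$ identified with a vector supported on the coordinates in $g$. Let $M\in\{0,1\}^{d\times n}$ satisfy $(M\mathbf{x})_i=\sum_{g\in\mathcal{G}:\,i\in g}(\text{entry of }\mathbf{x}_{j(g)}\text{ corresponding to }i)$. Let $\lambda>0$, $w_g>0$, $\mathbf{b}\in\mathbb{R}^d$, $\rho>0$, and $$L_\rho(\mathbf{x}^1,\mathbf{x}^2;\mathbf{y})=\lambda\sum_{g\in\mathcal{G}}w_g\|\mathbf{x}^1_{j(g)}\|_2+\tfrac12\|M\mathbf{x}^2-\mathbf{b}\|_2^2+\langle\mathbf{y},\mathbf{x}^1-\mathbf{x}^2\rangle+\tfrac{\rho}{2}\|\mathbf{x}^1-\mathbf{x}^2\|_2^2 .$$ Assume $L_\rho$ has a finite saddle point. Let $\alpha$ satisfy $0<\alpha<\rho$, and consider the sequences generated from initial points $\mathbf{x}^{1,0},\mathbf{x}^{2,0},\mathbf{y}^0\in\mathbb{R}^n$ by $$\mathbf{x}^{1,k+1}_{j(g)}=\arg\min_{\mathbf{z}\in\mathbb{R}^{|g|}}\lambda w_g\|\mathbf{z}\|_2+\tfrac{\rho}{2}\big\|\mathbf{z}-\mathbf{x}^{2,k}_{j(g)}+\tfrac1\rho\mathbf{y}^k_{j(g)}\big\|_2^2\quad(g\in\mathcal{G}),$$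 $$\mathbf{x}^{2,k+1}=\arg\min_{\mathbf{x}^2\in\mathbb{R}^n}\tfrac12\|M\mathbf{x}^2-\mathbf{b}\|_2^2+\tfrac{\rho}{2}\big\|\mathbf{x}^2-\mathbf{x}^{1,k+1}-\tfrac1\rho\mathbf{y}^k\big\|_2^2,$$ $$\mathbf{y}^{k+1}=\mathbf{y}^k+\alpha(\mathbf{x}^{1,k+1}-\mathbf{x}^{2,k+1}).$$ Then the sequences $\{\mathbf{x}^{1,k}\}$, $\{\mathbf{x}^{2,k}\}$ and $\{\mathbf{y}^k\}$ are uniformly bounded.
   Context: A saddle point of $L_\rho$ is $(\mathbf{x}^{1,*},\mathbf{x}^{2,*};\mathbf{y}^* )$ with $L_\rho(\mathbf{x}^{1,*},\mathbf{x}^{2,*};\mathbf{y})\le L_\rho(\mathbf{x}^{1,*},\mathbf{x}^{2,*};\mathbf{y}^* )\le L_\rho(\mathbf{x}^1,\mathbf{x}^2;\mathbf{y}^* )$ for all $\mathbf{x}^1,\mathbf{x}^2,\mathbf{y}$. The iteration is ADMM with dual stepsize $\alpha$ applied to $\min\lambda\sum_g w_g\|\mathbf{x}^1_{j(g)}\|_2+\frac12\|M\mathbf{x}^2-\mathbf{b}\|_2^2$ s.t. $\mathbf{x}^1=\mathbf{x}^2$ (the proximal operator of the latent overlapping group lasso penalty at $\mathbf{b}$). *)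

theory Defs
  imports "HOL-Analysis.Analysis"
begin

text \<open>Vectors in R^n, n = sum of |g| over the groups, are represented as functions on the
  index set of pairs (g,i) with g a group and i in g: the block j(g) consists of the
  coordinates (g,i), i in g, and the entry of x_{j(g)} corresponding to i is x (g,i).
  Values of such functions outside this index set are irrelevant.\<close>

definition idx :: "nat set set \<Rightarrow> (nat set \<times> nat) set" where
  "idx G = Sigma G (\<lambda>g. g)"

type_synonym lvec = "nat set \<times> nat \<Rightarrow> real"

definition blocknorm :: "lvec \<Rightarrow> nat set \<Rightarrow> real" where
  "blocknorm x g = sqrt (\<Sum>i\<in>g. (x (g,i))\<^sup>2)"

definition Mop :: "nat set set \<Rightarrow> lvec \<Rightarrow> nat \<Rightarrow> real" where
  "Mop G x i = (\<Sum>g\<in>{g\<in>G. i \<in> g}. x (g,i))"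

definition resid_sq :: "nat \<Rightarrow> nat set set \<Rightarrow> (nat \<Rightarrow> real) \<Rightarrow> lvec \<Rightarrow> real" where
  "resid_sq d G b x = (\<Sum>i\<in>{1..d}. (Mop G x i - b i)\<^sup>2)"

definition linner :: "nat set set \<Rightarrow> lvec \<Rightarrow> lvec \<Rightarrow> real" where
  "linner G x y = (\<Sum>p\<in>idx G. x p * y p)"

definition lsqnorm :: "nat set set \<Rightarrow> lvec \<Rightarrow> real" where
  "lsqnorm G x = (\<Sum>p\<in>idx G. (x p)\<^sup>2)"

definition Lrho :: "nat \<Rightarrow> nat set set \<Rightarrow> real \<Rightarrow> (nat set \<Rightarrow> real) \<Rightarrow> (nat \<Rightarrow> real) \<Rightarrow> real
                     \<Rightarrow> lvec \<Rightarrow> lvec \<Rightarrow> lvec \<Rightarrow> real" where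
  "Lrho d G lam w b rho x1 x2 y =
     lam * (\<Sum>g\<in>G. w g * blocknorm x1 g) + 1/2 * resid_sq d G b x2
     + linner G y (\<lambda>p. x1 p - x2 p) + rho/2 * lsqnorm G (\<lambda>p. x1 p - x2 p)"

definition saddle_point where
  "saddle_point d G lam w b rho x1s x2s ys \<longleftrightarrow>
     (\<forall>x1 x2 y. Lrho d G lam w b rho x1s x2s y \<le> Lrho d G lam w b rho x1s x2s ys
              \<and> Lrho d G lam w b rho x1s x2s ys \<le> Lrho d G lam w b rho x1 x2 ys)"

end

theory Submission
  imports Defs
begin

text \<open>The saddle point gives a common point x* = x1* = x2* minimizing both
  penalty + <y*, .> and residual - <y*, .>. The optimality conditions of the two ADMM
  subproblems are variational inequalities; testing them at x* and adding the saddle-point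
  inequalities shows that E k = ||y k - y*||^2 / alpha + rho ||x2 k - x*||^2 is nonincreasing
  as long as alpha <= rho. Hence y k and x2 k stay bounded, and so does
  x1 (k+1) = x2 (k+1) + (y (k+1) - y k) / alpha.\<close>

lemma linear_coeff_nonneg_if_quadratic_nonneg:
  fixes A B :: real
  assumes "\<And>t. 0 < t \<Longrightarrow> t \<le> 1 \<Longrightarrow> 0 \<le> t * A + t\<^sup>2 * B"
  shows "0 \<le> A"
proof (rule tendsto_lowerbound)
  show "((\<lambda>t. A + t * B) \<longlongrightarrow> A) (at_right 0)"
    by (auto intro!: tendsto_eq_intros)
  have "0 \<le> A + t * B" if "0 < t" "t < 1" for t :: real
  proof -
    have "0 \<le> t * (A + t * B)"
      using assms[of t] that by (simp add: power2_eq_square algebra_simps)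
    then show ?thesis
      using \<open>0 < t\<close> by (simp add: zero_le_mult_iff)
  qed
  then show "\<forall>\<^sub>F t in at_right 0. 0 \<le> A + t * B"
    unfolding eventually_at_right_field by (intro exI[of _ 1]) auto
qed simp

text \<open>Convexity on the space of real functions, which the library does not make a
  real_vector instance, so that convex_on does not apply.\<close>

definition convex_fun :: "(('a \<Rightarrow> real) \<Rightarrow> real) \<Rightarrow> bool" where
  "convex_fun F \<longleftrightarrow>
     (\<forall>x v t. 0 \<le> t \<longrightarrow> t \<le> 1 \<longrightarrow> F (\<lambda>p. (1 - t) * x p + t * v p) \<le> (1 - t) * F x + t * F v)"

lemma convex_funD:
  "convex_fun F \<Longrightarrow> 0 \<le> t \<Longrightarrow> t \<le> 1 \<Longrightarrow> F (\<lambda>p. (1 - t) * x p + t * v p) \<le> (1 - t) * F x + t * F v"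
  unfolding convex_fun_def by blast

lemma convex_fun_add:
  assumes "convex_fun F" "convex_fun H"
  shows "convex_fun (\<lambda>x. F x + H x)"
  unfolding convex_fun_def
proof (intro allI impI)
  fix x v :: "'a \<Rightarrow> real" and t :: real
  assume "0 \<le> t" "t \<le> 1"
  then have "F (\<lambda>p. (1 - t) * x p + t * v p) + H (\<lambda>p. (1 - t) * x p + t * v p)
      \<le> ((1 - t) * F x + t * F v) + ((1 - t) * H x + t * H v)"
    using assms by (intro add_mono convex_funD)
  then show "F (\<lambda>p. (1 - t) * x p + t * v p) + H (\<lambda>p. (1 - t) * x p + t * v p)
      \<le> (1 - t) * (F x + H x) + t * (F v + H v)"
    by (simp add: algebra_simps)
qed

lemma convex_fun_scale:
  assumes "0 \<le> c" "convex_fun F"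
  shows "convex_fun (\<lambda>x. c * F x)"
  unfolding convex_fun_def
proof (intro allI impI)
  fix x v :: "'a \<Rightarrow> real" and t :: real
  assume "0 \<le> t" "t \<le> 1"
  then have "c * F (\<lambda>p. (1 - t) * x p + t * v p) \<le> c * ((1 - t) * F x + t * F v)"
    using assms by (intro mult_left_mono convex_funD)
  then show "c * F (\<lambda>p. (1 - t) * x p + t * v p) \<le> (1 - t) * (c * F x) + t * (c * F v)"
    by (simp add: algebra_simps)
qed

lemma convex_fun_sum:
  assumes "\<And>i. i \<in> I \<Longrightarrow> convex_fun (F i)"
  shows "convex_fun (\<lambda>x. \<Sum>i\<in>I. F i x)"
  using assms
proof (induction I rule: infinite_finite_induct)
  case (insert i I)
  then show ?case by (simp add: convex_fun_add)
qed (simp_all add: convex_fun_def)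

lemma convex_fun_linear: "convex_fun (\<lambda>x. \<Sum>p\<in>P. c p * x p)"
  unfolding convex_fun_def
  by (simp add: distrib_left sum.distrib sum_distrib_left mult.left_commute)

lemma convex_fun_L2_set: "convex_fun (\<lambda>x. L2_set (\<lambda>i. x (e i)) A)"
  unfolding convex_fun_def
proof (intro allI impI)
  fix x v :: "'a \<Rightarrow> real" and t :: real
  assume "0 \<le> t" "t \<le> 1"
  then show "L2_set (\<lambda>i. (1 - t) * x (e i) + t * v (e i)) A
      \<le> (1 - t) * L2_set (\<lambda>i. x (e i)) A + t * L2_set (\<lambda>i. v (e i)) A"
    using L2_set_triangle_ineq by (simp add: L2_set_right_distrib)
qed

lemma convex_fun_square_affine:
  assumes "\<And>x v t. L (\<lambda>p. (1 - t) * x p + t * v p) = (1 - t) * L x + t * L v"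
  shows "convex_fun (\<lambda>x. (L x - c)\<^sup>2)"
  unfolding convex_fun_def
proof (intro allI impI)
  fix x v :: "'a \<Rightarrow> real" and t :: real
  assume t: "0 \<le> t" "t \<le> 1"
  have "(1 - t) * (L x - c)\<^sup>2 + t * (L v - c)\<^sup>2 - ((1 - t) * L x + t * L v - c)\<^sup>2
      = t * (1 - t) * (L x - L v)\<^sup>2"
    by (simp add: power2_eq_square algebra_simps)
  moreover have "0 \<le> t * (1 - t) * (L x - L v)\<^sup>2"
    using t by simp
  ultimately show "(L (\<lambda>p. (1 - t) * x p + t * v p) - c)\<^sup>2 \<le> (1 - t) * (L x - c)\<^sup>2 + t * (L v - c)\<^sup>2"
    unfolding assms by linarith
qed

lemma convex_fun_resid_sq: "convex_fun (resid_sq d G b)"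
  unfolding resid_sq_def Mop_def
  by (intro convex_fun_sum convex_fun_square_affine)
    (simp add: sum.distrib sum_distrib_left mult.assoc)

definition group_lasso_penalty :: "nat set set \<Rightarrow> real \<Rightarrow> (nat set \<Rightarrow> real) \<Rightarrow> lvec \<Rightarrow> real" where
  "group_lasso_penalty G lam w x = lam * (\<Sum>g\<in>G. w g * blocknorm x g)"

lemma convex_fun_group_lasso_penalty:
  assumes "0 \<le> lam" "\<forall>g\<in>G. 0 \<le> w g"
  shows "convex_fun (group_lasso_penalty G lam w)"
  unfolding group_lasso_penalty_def blocknorm_def L2_set_def[symmetric]
  using assms by (intro convex_fun_scale convex_fun_sum convex_fun_L2_set) auto

lemma prox_variational_inequality:
  fixes F :: "('a \<Rightarrow> real) \<Rightarrow> real" and x a v :: "'a \<Rightarrow> real"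
  assumes "convex_fun F"
    and min: "\<And>z. F x + rho/2 * (\<Sum>p\<in>P. (x p - a p)\<^sup>2) \<le> F z + rho/2 * (\<Sum>p\<in>P. (z p - a p)\<^sup>2)"
  shows "0 \<le> F v - F x + rho * (\<Sum>p\<in>P. (x p - a p) * (v p - x p))"
proof -
  define Q where "Q = (\<Sum>p\<in>P. (x p - a p)\<^sup>2)"
  define L where "L = (\<Sum>p\<in>P. (x p - a p) * (v p - x p))"
  define R where "R = (\<Sum>p\<in>P. (v p - x p)\<^sup>2)"
  have "0 \<le> t * (F v - F x + rho * L) + t\<^sup>2 * (rho/2 * R)" if "0 < t" "t \<le> 1" for t
  proof -
    define z where "z p = (1 - t) * x p + t * v p" for p
    have "(z p - a p)\<^sup>2 = (x p - a p)\<^sup>2 + 2 * t * ((x p - a p) * (v p - x p)) + t\<^sup>2 * (v p - x p)\<^sup>2" for p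
      by (simp add: z_def power2_eq_square algebra_simps)
    then have "(\<Sum>p\<in>P. (z p - a p)\<^sup>2) = Q + 2 * t * L + t\<^sup>2 * R"
      by (simp add: Q_def L_def R_def sum.distrib sum_distrib_left)
    moreover have "F z \<le> (1 - t) * F x + t * F v"
      unfolding z_def using assms(1) that by (intro convex_funD) auto
    ultimately show ?thesis
      using min[of z] unfolding Q_def[symmetric] by (simp add: algebra_simps)
  qed
  then have "0 \<le> F v - F x + rho * L"
    by (rule linear_coeff_nonneg_if_quadratic_nonneg)
  then show ?thesis
    by (simp add: L_def)
qed

lemma sum_idx:
  assumes "finite G" "\<forall>g\<in>G. finite g"
  shows "(\<Sum>p\<in>idx G. \<phi> p) = (\<Sum>g\<in>G. \<Sum>i\<in>g. \<phi> (g, i))"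
  using assms unfolding idx_def by (simp add: sum.Sigma split_beta')

lemma group_lasso_penalty_cong:
  assumes "\<forall>p\<in>idx G. x p = x' p"
  shows "group_lasso_penalty G lam w x = group_lasso_penalty G lam w x'"
  using assms unfolding group_lasso_penalty_def blocknorm_def idx_def by simp

lemma Lrho_eq:
  "Lrho d G lam w b rho x1 x2 y =
     group_lasso_penalty G lam w x1 + 1/2 * resid_sq d G b x2
     + (\<Sum>p\<in>idx G. y p * (x1 p - x2 p)) + rho/2 * (\<Sum>p\<in>idx G. (x1 p - x2 p)\<^sup>2)"
  by (simp add: Lrho_def group_lasso_penalty_def linner_def lsqnorm_def)

lemma vanishes_if_pairing_bounded_above:
  fixes e ys :: "'a \<Rightarrow> real"
  assumes "finite P" "\<And>y. (\<Sum>p\<in>P. y p * e p) \<le> (\<Sum>p\<in>P. ys p * e p)"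
  shows "\<forall>p\<in>P. e p = 0"
proof -
  have "(\<Sum>p\<in>P. (e p)\<^sup>2) \<le> 0"
    using assms(2)[of "\<lambda>p. ys p + e p"] by (simp add: distrib_right sum.distrib power2_eq_square)
  then have "(\<Sum>p\<in>P. (e p)\<^sup>2) = 0"
    by (intro antisym sum_nonneg) auto
  then show ?thesis
    using assms(1) by (simp add: sum_nonneg_eq_0_iff)
qed

lemma saddle_point_optimality:
  assumes saddle: "saddle_point d G lam w b rho x1s x2s ys"
    and fin: "finite (idx G)" and lam: "0 \<le> lam" and w: "\<forall>g\<in>G. 0 \<le> w g"
  shows "\<And>v. group_lasso_penalty G lam w x2s + (\<Sum>p\<in>idx G. ys p * x2s p)
              \<le> group_lasso_penalty G lam w v + (\<Sum>p\<in>idx G. ys p * v p)"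
    and "\<And>v. 1/2 * resid_sq d G b x2s - (\<Sum>p\<in>idx G. ys p * x2s p)
              \<le> 1/2 * resid_sq d G b v - (\<Sum>p\<in>idx G. ys p * v p)"
proof -
  let ?P = "idx G"
  let ?f = "\<lambda>z. group_lasso_penalty G lam w z + (\<Sum>p\<in>?P. ys p * z p)"
  let ?h = "\<lambda>z. 1/2 * resid_sq d G b z - (\<Sum>p\<in>?P. ys p * z p)"
  have upper: "\<And>y. Lrho d G lam w b rho x1s x2s y \<le> Lrho d G lam w b rho x1s x2s ys"
    and lower: "\<And>u v. Lrho d G lam w b rho x1s x2s ys \<le> Lrho d G lam w b rho u v ys"
    using saddle unfolding saddle_point_def by auto
  have "(\<Sum>p\<in>?P. y p * (x1s p - x2s p)) \<le> (\<Sum>p\<in>?P. ys p * (x1s p - x2s p))" for y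
    using upper[of y] unfolding Lrho_eq by linarith
  then have feasible: "\<forall>p\<in>?P. x1s p = x2s p"
    using vanishes_if_pairing_bounded_above[OF fin] by fastforce
  have pairing_diff: "(\<Sum>p\<in>?P. ys p * (u p - v p)) = (\<Sum>p\<in>?P. ys p * u p) - (\<Sum>p\<in>?P. ys p * v p)"
    for u v :: lvec
    by (simp add: right_diff_distrib sum_subtractf)
  have "convex_fun ?f"
    using lam w by (intro convex_fun_add convex_fun_group_lasso_penalty convex_fun_linear)
  moreover have "?f x1s + rho/2 * (\<Sum>p\<in>?P. (x1s p - x2s p)\<^sup>2) \<le> ?f z + rho/2 * (\<Sum>p\<in>?P. (z p - x2s p)\<^sup>2)"
    for z
    using lower[of z x2s] unfolding Lrho_eq pairing_diff by simp
  ultimately have "0 \<le> ?f v - ?f x1s + rho * (\<Sum>p\<in>?P. (x1s p - x2s p) * (v p - x1s p))" for v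
    by (rule prox_variational_inequality)
  moreover have "?f x1s = ?f x2s"
    using feasible group_lasso_penalty_cong[OF feasible] by simp
  ultimately show "?f x2s \<le> ?f v" for v
    using feasible by simp
  have "convex_fun (\<lambda>z. 1/2 * resid_sq d G b z + (\<Sum>p\<in>?P. - ys p * z p))"
    by (intro convex_fun_add convex_fun_scale convex_fun_resid_sq convex_fun_linear) simp
  then have "convex_fun ?h"
    by (simp add: sum_negf)
  moreover have "?h x2s + rho/2 * (\<Sum>p\<in>?P. (x2s p - x1s p)\<^sup>2) \<le> ?h z + rho/2 * (\<Sum>p\<in>?P. (z p - x1s p)\<^sup>2)"
    for z
    using lower[of x1s z] unfolding Lrho_eq pairing_diff by (simp add: power2_commute)
  ultimately have "0 \<le> ?h v - ?h x2s + rho * (\<Sum>p\<in>?P. (x2s p - x1s p) * (v p - x2s p))" for v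
    by (rule prox_variational_inequality)
  then show "?h x2s \<le> ?h v" for v
    using feasible by simp
qed

lemma group_lasso_prox_step:
  assumes fin: "finite G" "\<forall>g\<in>G. finite g" and lam: "0 \<le> lam" and w: "\<forall>g\<in>G. 0 \<le> w g"
    and rho: "rho \<noteq> 0"
    and min: "\<forall>g\<in>G. \<forall>z :: nat \<Rightarrow> real.
        lam * w g * sqrt (\<Sum>i\<in>g. (u (g,i))\<^sup>2) + rho/2 * (\<Sum>i\<in>g. (u (g,i) - x (g,i) + y (g,i) / rho)\<^sup>2)
        \<le> lam * w g * sqrt (\<Sum>i\<in>g. (z i)\<^sup>2) + rho/2 * (\<Sum>i\<in>g. (z i - x (g,i) + y (g,i) / rho)\<^sup>2)"
  shows "0 \<le> group_lasso_penalty G lam w v - group_lasso_penalty G lam w u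
              + (\<Sum>p\<in>idx G. (y p + rho * (u p - x p)) * (v p - u p))"
proof -
  have block: "0 \<le> lam * w g * blocknorm v g - lam * w g * blocknorm u g
      + (\<Sum>i\<in>g. (y (g,i) + rho * (u (g,i) - x (g,i))) * (v (g,i) - u (g,i)))" if g: "g \<in> G" for g
  proof -
    let ?a = "\<lambda>i. x (g,i) - y (g,i) / rho"
    have "convex_fun (\<lambda>z. lam * w g * L2_set z g)"
      using lam w g by (intro convex_fun_scale convex_fun_L2_set[of "\<lambda>i. i", simplified]) auto
    moreover have "lam * w g * L2_set (\<lambda>i. u (g,i)) g + rho/2 * (\<Sum>i\<in>g. (u (g,i) - ?a i)\<^sup>2)
        \<le> lam * w g * L2_set z g + rho/2 * (\<Sum>i\<in>g. (z i - ?a i)\<^sup>2)" for z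
      using min g unfolding L2_set_def by (simp add: algebra_simps)
    ultimately have "0 \<le> lam * w g * L2_set (\<lambda>i. v (g,i)) g - lam * w g * L2_set (\<lambda>i. u (g,i)) g
        + rho * (\<Sum>i\<in>g. (u (g,i) - ?a i) * (v (g,i) - u (g,i)))"
      by (rule prox_variational_inequality)
    moreover have "rho * (u (g,i) - ?a i) = y (g,i) + rho * (u (g,i) - x (g,i))" for i
      using rho by (simp add: field_simps)
    ultimately show ?thesis
      unfolding blocknorm_def L2_set_def[symmetric] sum_distrib_left by (simp add: mult.assoc[symmetric])
  qed
  have "0 \<le> (\<Sum>g\<in>G. lam * w g * blocknorm v g - lam * w g * blocknorm u g
      + (\<Sum>i\<in>g. (y (g,i) + rho * (u (g,i) - x (g,i))) * (v (g,i) - u (g,i))))"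
    using block by (intro sum_nonneg) auto
  then show ?thesis
    unfolding group_lasso_penalty_def sum_idx[OF fin]
    by (simp add: sum.distrib sum_subtractf sum_distrib_left mult.assoc)
qed

lemma resid_prox_step:
  assumes rho: "rho \<noteq> 0"
    and min: "\<forall>z :: lvec.
        1/2 * resid_sq d G b u + rho/2 * lsqnorm G (\<lambda>p. u p - x p - y p / rho)
        \<le> 1/2 * resid_sq d G b z + rho/2 * lsqnorm G (\<lambda>p. z p - x p - y p / rho)"
  shows "0 \<le> 1/2 * resid_sq d G b v - 1/2 * resid_sq d G b u
              + (\<Sum>p\<in>idx G. (y p + rho * (x p - u p)) * (u p - v p))"
proof -
  let ?a = "\<lambda>p. x p + y p / rho"
  have "convex_fun (\<lambda>z. 1/2 * resid_sq d G b z)"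
    by (intro convex_fun_scale convex_fun_resid_sq) simp
  moreover have "1/2 * resid_sq d G b u + rho/2 * (\<Sum>p\<in>idx G. (u p - ?a p)\<^sup>2)
      \<le> 1/2 * resid_sq d G b z + rho/2 * (\<Sum>p\<in>idx G. (z p - ?a p)\<^sup>2)" for z
    using min unfolding lsqnorm_def by (simp add: diff_diff_eq)
  ultimately have "0 \<le> 1/2 * resid_sq d G b v - 1/2 * resid_sq d G b u
      + rho * (\<Sum>p\<in>idx G. (u p - ?a p) * (v p - u p))"
    by (rule prox_variational_inequality)
  moreover have "rho * ((u p - ?a p) * (v p - u p)) = (y p + rho * (x p - u p)) * (u p - v p)" for p
    using rho by (simp add: field_simps)
  ultimately show ?thesis
    by (simp add: sum_distrib_left)
qed

definition admm_energy :: "'a set \<Rightarrow> real \<Rightarrow> real \<Rightarrow> ('a \<Rightarrow> real) \<Rightarrow> ('a \<Rightarrow> real)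
                             \<Rightarrow> ('a \<Rightarrow> real) \<Rightarrow> ('a \<Rightarrow> real) \<Rightarrow> real" where
  "admm_energy P \<alpha> rho ys xs y x =
     (\<Sum>p\<in>P. (y p - ys p)\<^sup>2) / \<alpha> + rho * (\<Sum>p\<in>P. (x p - xs p)\<^sup>2)"

lemma admm_energy_decrease:
  fixes f h :: "('a \<Rightarrow> real) \<Rightarrow> real" and xs ys y x2 a1 a2 y' :: "'a \<Rightarrow> real"
  assumes opt_f: "f xs + (\<Sum>p\<in>P. ys p * xs p) \<le> f a1 + (\<Sum>p\<in>P. ys p * a1 p)"
    and opt_h: "h xs - (\<Sum>p\<in>P. ys p * xs p) \<le> h a2 - (\<Sum>p\<in>P. ys p * a2 p)"
    and step_f: "0 \<le> f xs - f a1 + (\<Sum>p\<in>P. (y p + rho * (a1 p - x2 p)) * (xs p - a1 p))"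
    and step_h: "0 \<le> h xs - h a2 + (\<Sum>p\<in>P. (y p + rho * (a1 p - a2 p)) * (a2 p - xs p))"
    and step_y: "\<And>p. y' p = y p + \<alpha> * (a1 p - a2 p)"
    and \<alpha>: "0 < \<alpha>" "\<alpha> \<le> rho"
  shows "admm_energy P \<alpha> rho ys xs y' a2 \<le> admm_energy P \<alpha> rho ys xs y x2"
proof -
  define S1 where "S1 = (\<Sum>p\<in>P. (y p - ys p + rho * (a1 p - x2 p)) * (a1 p - xs p))"
  define S2 where "S2 = (\<Sum>p\<in>P. (y p - ys p + rho * (a1 p - a2 p)) * (a2 p - xs p))"
  \<comment> \<open>S1 and S2 are the subproblem inequalities tested at the saddle point; the remainder
    N is nonnegative exactly because alpha <= rho.\<close>
  define N where "N p = rho * (a1 p - x2 p)\<^sup>2 + (rho - \<alpha>) * (a1 p - a2 p)\<^sup>2" for p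
  have "S1 = (\<Sum>p\<in>P. ys p * xs p) - (\<Sum>p\<in>P. ys p * a1 p)
             - (\<Sum>p\<in>P. (y p + rho * (a1 p - x2 p)) * (xs p - a1 p))"
    unfolding S1_def sum_subtractf[symmetric] by (intro sum.cong) (simp_all add: algebra_simps)
  then have "S1 \<le> 0"
    using opt_f step_f by linarith
  have "S2 = (\<Sum>p\<in>P. (y p + rho * (a1 p - a2 p)) * (a2 p - xs p))
             - ((\<Sum>p\<in>P. ys p * a2 p) - (\<Sum>p\<in>P. ys p * xs p))"
    unfolding S2_def sum_subtractf[symmetric] by (intro sum.cong) (simp_all add: algebra_simps)
  then have "0 \<le> S2"
    using opt_h step_h by linarith
  have "0 \<le> sum N P"
    unfolding N_def using \<alpha> by (intro sum_nonneg) simp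
  have energy_sum: "admm_energy P \<alpha> rho ys xs u v = (\<Sum>p\<in>P. (u p - ys p)\<^sup>2 / \<alpha> + rho * (v p - xs p)\<^sup>2)"
    for u v
    by (simp add: admm_energy_def sum.distrib sum_divide_distrib sum_distrib_left)
  have "(y' p - ys p)\<^sup>2 / \<alpha> + rho * (a2 p - xs p)\<^sup>2 - ((y p - ys p)\<^sup>2 / \<alpha> + rho * (x2 p - xs p)\<^sup>2)
      = 2 * ((y p - ys p + rho * (a1 p - x2 p)) * (a1 p - xs p))
        - 2 * ((y p - ys p + rho * (a1 p - a2 p)) * (a2 p - xs p)) - N p" for p
    unfolding step_y N_def using \<alpha> by (simp add: field_simps power2_eq_square)
  then have "admm_energy P \<alpha> rho ys xs y' a2 - admm_energy P \<alpha> rho ys xs y x2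
      = (\<Sum>p\<in>P. 2 * ((y p - ys p + rho * (a1 p - x2 p)) * (a1 p - xs p))
                 - 2 * ((y p - ys p + rho * (a1 p - a2 p)) * (a2 p - xs p)) - N p)"
    unfolding energy_sum sum_subtractf[symmetric] by simp
  also have "\<dots> = 2 * S1 - 2 * S2 - sum N P"
    by (simp add: S1_def S2_def sum_subtractf sum_distrib_left)
  finally show ?thesis
    using \<open>S1 \<le> 0\<close> \<open>0 \<le> S2\<close> \<open>0 \<le> sum N P\<close> by linarith
qed

lemma bounded_if_sum_sq_dist_bounded:
  fixes u :: "nat \<Rightarrow> 'a \<Rightarrow> real"
  assumes fin: "finite P" and bound: "\<And>k. (\<Sum>p\<in>P. (u k p - c p)\<^sup>2) \<le> B"
  shows "\<exists>C. \<forall>k. \<forall>p\<in>P. \<bar>u k p\<bar> \<le> C"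
proof (intro exI allI ballI)
  fix k p assume p: "p \<in> P"
  have "(u k p - c p)\<^sup>2 \<le> B"
    using member_le_sum[OF p, of "\<lambda>q. (u k q - c q)\<^sup>2"] fin bound[of k] by simp
  then have "\<bar>u k p - c p\<bar> \<le> sqrt B"
    using real_sqrt_le_mono by fastforce
  moreover have "\<bar>c p\<bar> \<le> (\<Sum>q\<in>P. \<bar>c q\<bar>)"
    using member_le_sum[OF p, of "\<lambda>q. \<bar>c q\<bar>"] fin by simp
  ultimately show "\<bar>u k p\<bar> \<le> (\<Sum>q\<in>P. \<bar>c q\<bar>) + sqrt B"
    by linarith
qed

lemma admm_iterates_bounded:
  fixes x1 x2 y :: "nat \<Rightarrow> 'a \<Rightarrow> real"
  assumes fin: "finite P" and \<alpha>: "0 < \<alpha>" and rho: "0 < rho"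
    and step_y: "\<And>k p. y (Suc k) p = y k p + \<alpha> * (x1 (Suc k) p - x2 (Suc k) p)"
    and energy: "\<And>k. admm_energy P \<alpha> rho ys xs (y k) (x2 k) \<le> B"
  shows "\<exists>C. \<forall>k. \<forall>p\<in>P. \<bar>x1 k p\<bar> \<le> C \<and> \<bar>x2 k p\<bar> \<le> C \<and> \<bar>y k p\<bar> \<le> C"
proof -
  have y_sq: "(\<Sum>p\<in>P. (y k p - ys p)\<^sup>2) \<le> \<alpha> * B"
    and x2_sq: "(\<Sum>p\<in>P. (x2 k p - xs p)\<^sup>2) \<le> B / rho" for k
  proof -
    have "0 \<le> (\<Sum>p\<in>P. (y k p - ys p)\<^sup>2) / \<alpha>" "0 \<le> rho * (\<Sum>p\<in>P. (x2 k p - xs p)\<^sup>2)"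
      using \<alpha> rho by (simp_all add: sum_nonneg)
    then have "(\<Sum>p\<in>P. (y k p - ys p)\<^sup>2) / \<alpha> \<le> B" "rho * (\<Sum>p\<in>P. (x2 k p - xs p)\<^sup>2) \<le> B"
      using energy[of k] unfolding admm_energy_def by linarith+
    then show "(\<Sum>p\<in>P. (y k p - ys p)\<^sup>2) \<le> \<alpha> * B" "(\<Sum>p\<in>P. (x2 k p - xs p)\<^sup>2) \<le> B / rho"
      using \<alpha> rho by (simp_all add: divide_le_eq le_divide_eq mult.commute)
  qed
  have "\<exists>C. \<forall>k. \<forall>p\<in>P. \<bar>y k p\<bar> \<le> C"
    by (rule bounded_if_sum_sq_dist_bounded[OF fin y_sq])
  then obtain Cy where Cy: "\<forall>k. \<forall>p\<in>P. \<bar>y k p\<bar> \<le> Cy" ..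
  have "\<exists>C. \<forall>k. \<forall>p\<in>P. \<bar>x2 k p\<bar> \<le> C"
    by (rule bounded_if_sum_sq_dist_bounded[OF fin x2_sq])
  then obtain Cx where Cx: "\<forall>k. \<forall>p\<in>P. \<bar>x2 k p\<bar> \<le> Cx" ..
  have x1_0: "\<bar>x1 0 p\<bar> \<le> (\<Sum>q\<in>P. \<bar>x1 0 q\<bar>)" if "p \<in> P" for p
    using member_le_sum[OF that, of "\<lambda>q. \<bar>x1 0 q\<bar>"] fin by simp
  have x1_Suc: "\<bar>x1 (Suc k) p\<bar> \<le> Cx + 2 * Cy / \<alpha>" if p: "p \<in> P" for k p
  proof -
    have "\<bar>y (Suc k) p\<bar> \<le> Cy" "\<bar>y k p\<bar> \<le> Cy" "\<bar>x2 (Suc k) p\<bar> \<le> Cx"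
      using Cx Cy p by auto
    then have "\<bar>(y (Suc k) p - y k p) / \<alpha>\<bar> \<le> 2 * Cy / \<alpha>"
      using abs_triangle_ineq4[of "y (Suc k) p" "y k p"] \<alpha> by (simp add: divide_right_mono)
    moreover have "x1 (Suc k) p = x2 (Suc k) p + (y (Suc k) p - y k p) / \<alpha>"
      using step_y[of k p] \<alpha> by (simp add: field_simps)
    ultimately show ?thesis
      using \<open>\<bar>x2 (Suc k) p\<bar> \<le> Cx\<close> abs_triangle_ineq[of "x2 (Suc k) p"] by linarith
  qed
  show ?thesis
  proof (intro exI allI ballI)
    fix k p assume "p \<in> P"
    then show "\<bar>x1 k p\<bar> \<le> max (max (\<Sum>q\<in>P. \<bar>x1 0 q\<bar>) (Cx + 2 * Cy / \<alpha>)) (max Cx Cy)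
        \<and> \<bar>x2 k p\<bar> \<le> max (max (\<Sum>q\<in>P. \<bar>x1 0 q\<bar>) (Cx + 2 * Cy / \<alpha>)) (max Cx Cy)
        \<and> \<bar>y k p\<bar> \<le> max (max (\<Sum>q\<in>P. \<bar>x1 0 q\<bar>) (Cx + 2 * Cy / \<alpha>)) (max Cx Cy)"
      using x1_0 x1_Suc Cx Cy by (cases k) (auto simp: le_max_iff_disj)
  qed
qed

theorem lemma3p2:
  fixes d :: nat and G :: "nat set set" and lam rho \<alpha> :: real
    and w :: "nat set \<Rightarrow> real" and b :: "nat \<Rightarrow> real"
    and x1 x2 y :: "nat \<Rightarrow> lvec"
  assumes G_fin: "finite G"
    and G_sub: "\<forall>g\<in>G. g \<noteq> {} \<and> g \<subseteq> {1..d}"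
    and lam_pos: "lam > 0" and w_pos: "\<forall>g\<in>G. w g > 0" and rho_pos: "rho > 0"
    and saddle: "\<exists>x1s x2s ys. saddle_point d G lam w b rho x1s x2s ys"
    and alpha: "0 < \<alpha>" "\<alpha> < rho"
    and x1_upd: "\<forall>k. \<forall>g\<in>G. \<forall>z :: nat \<Rightarrow> real.
        lam * w g * sqrt (\<Sum>i\<in>g. (x1 (Suc k) (g,i))\<^sup>2)
          + rho/2 * (\<Sum>i\<in>g. (x1 (Suc k) (g,i) - x2 k (g,i) + y k (g,i) / rho)\<^sup>2)
        \<le> lam * w g * sqrt (\<Sum>i\<in>g. (z i)\<^sup>2)
          + rho/2 * (\<Sum>i\<in>g. (z i - x2 k (g,i) + y k (g,i) / rho)\<^sup>2)"
    and x2_upd: "\<forall>k. \<forall>z :: lvec.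
        1/2 * resid_sq d G b (x2 (Suc k))
          + rho/2 * lsqnorm G (\<lambda>p. x2 (Suc k) p - x1 (Suc k) p - y k p / rho)
        \<le> 1/2 * resid_sq d G b z
          + rho/2 * lsqnorm G (\<lambda>p. z p - x1 (Suc k) p - y k p / rho)"
    and y_upd: "\<forall>k. \<forall>p. y (Suc k) p = y k p + \<alpha> * (x1 (Suc k) p - x2 (Suc k) p)"
  shows "\<exists>C. \<forall>k. \<forall>p\<in>idx G. \<bar>x1 k p\<bar> \<le> C \<and> \<bar>x2 k p\<bar> \<le> C \<and> \<bar>y k p\<bar> \<le> C"
proof -
  have fin_groups: "\<forall>g\<in>G. finite g"
    using G_sub finite_subset by blast
  then have fin_idx: "finite (idx G)"
    unfolding idx_def using G_fin by (simp add: finite_SigmaI)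
  have lam: "0 \<le> lam" and w: "\<forall>g\<in>G. 0 \<le> w g"
    using lam_pos w_pos by auto
  obtain x1s x2s ys where "saddle_point d G lam w b rho x1s x2s ys"
    using saddle by blast
  note optimal = saddle_point_optimality[OF this fin_idx lam w]
  let ?V = "\<lambda>k. admm_energy (idx G) \<alpha> rho ys x2s (y k) (x2 k)"
  have "?V (Suc k) \<le> ?V k" for k
  proof (rule admm_energy_decrease[where f = "group_lasso_penalty G lam w"
        and h = "\<lambda>z. 1/2 * resid_sq d G b z", OF optimal])
    show "0 \<le> group_lasso_penalty G lam w x2s - group_lasso_penalty G lam w (x1 (Suc k))
        + (\<Sum>p\<in>idx G. (y k p + rho * (x1 (Suc k) p - x2 k p)) * (x2s p - x1 (Suc k) p))"
      using x1_upd rho_pos by (intro group_lasso_prox_step[OF G_fin fin_groups lam w]) auto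
    show "0 \<le> 1/2 * resid_sq d G b x2s - 1/2 * resid_sq d G b (x2 (Suc k))
        + (\<Sum>p\<in>idx G. (y k p + rho * (x1 (Suc k) p - x2 (Suc k) p)) * (x2 (Suc k) p - x2s p))"
      using x2_upd rho_pos by (intro resid_prox_step) auto
  qed (use y_upd alpha in auto)
  then have "?V k \<le> ?V 0" for k
    by (rule lift_Suc_antimono_le) simp
  then show ?thesis
    using admm_iterates_bounded[OF fin_idx alpha(1) rho_pos] y_upd by blast
qed

end
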